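(* There exist absolute constants $c, C > 0$ and $m_0$ such that the following holds for every integer $m \geq m_0$. Let $s = \lceil \log_2 m \rceil + 2$, $k = m^2 s$ and $n = km$. Partition $[n]$ into blocks $B_1,\ldots,B_m$ with $|B_i| = k$, choose $T_i \subset B_i$ with $|T_i| = s$, put $T = \bigcup_i T_i$, and let $\mathcal{F} \subset \mathcal{P}([n])$ be the union-closed family generated by $\{B_i \cup \{t\} : i \in [m],\ t \in T\}$. Then both $\mathrm{AOD}(\mathcal{F})$ and the average abundance $\mathbb{E}_{x \in [n]}[\gamma_x] = \frac1n\sum_{x\in[n]}\gamma_x$ lie between $c\,\frac{\log_2\log_2|\mathcal{F}|}{\log_2|\mathcal{F}|}$ and $C\,\frac{\log_2\log_2|\mathcal{F}|}{\log_2|\mathcal{F}|}$.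
   Context: $[n] = \{1,\ldots,n\}$. A family of sets is union-closed if it contains the union of any two of its members; the union-closed family generated by $\mathcal{G}$ is the smallest union-closed family containing $\mathcal{G}$. For a finite nonempty family $\mathcal{F} \subset \mathcal{P}(X)$ and $x \in X$, the abundance is $\gamma_x = |\{A \in \mathcal{F} : x \in A\}|/|\mathcal{F}|$. For $\mathcal{F} \neq \emptyset,\{\emptyset\}$, the average overlap density is $\mathrm{AOD}(\mathcal{F}) = \frac{1}{|\mathcal{F}\setminus\{\emptyset\}|}\sum_{A \in \mathcal{F}\setminus\{\emptyset\}} \frac{1}{|A|}\sum_{x \in A}\gamma_x$. *)

theory Defs
  imports Complex_Main
begin

inductive_set uc_gen :: "'a set set \<Rightarrow> 'a set set" for G :: "'a set set" where
  base: "A \<in> G \<Longrightarrow> A \<in> uc_gen G"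
| union: "A \<in> uc_gen G \<Longrightarrow> B \<in> uc_gen G \<Longrightarrow> A \<union> B \<in> uc_gen G"

definition abundance :: "'a set set \<Rightarrow> 'a \<Rightarrow> real" where
  "abundance F x = real (card {A \<in> F. x \<in> A}) / real (card F)"

definition AOD :: "'a set set \<Rightarrow> real" where
  "AOD F = (1 / real (card (F - {{}}))) *
     (\<Sum>A \<in> F - {{}}. (1 / real (card A)) * (\<Sum>x\<in>A. abundance F x))"

end

theory Submission
  imports Defs
begin

text \<open>Every member of F is the union of the blocks it contains together with some elements of T
  outside those blocks. Counting these shapes, the members containing a fixed block B i number
  between 2^(s(m-1)) and (2^s+1)^(m-1), which is at most 3 * 2^(s(m-1)) because 2^s is at
  least 4m; hence |F| is m * 2^(s(m-1)) up to a factor 3. An element outside T lies in exactly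
  the members containing its block, so its abundance is of order 1/m. The elements of T make up at
  most a 1/m-fraction of [n] and of every member of F, since each member contains a block of size
  k = m^2 s = m |T|; so both averages are of order 1/m as well. Finally log |F| lies between
  s(m-1) and sm with s close to log m, which makes log log |F| / log |F| of order 1/m too.\<close>

lemma abundance_nonneg: "0 \<le> abundance F x"
  unfolding abundance_def by simp

lemma abundance_le_one: "abundance F x \<le> 1"
proof (cases "finite F")
  case True
  then have "card {A \<in> F. x \<in> A} \<le> card F" by (intro card_mono) auto
  then show ?thesis unfolding abundance_def by (cases "card F = 0") (simp_all add: divide_le_eq_1)
qed (simp add: abundance_def)

lemma mean_bounds_off_small_set:
  fixes f :: "'a \<Rightarrow> real"
  assumes fin: "finite A" and ne: "A \<noteq> {}"
    and unit: "\<And>x. x \<in> A \<Longrightarrow> 0 \<le> f x \<and> f x \<le> 1"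
    and bounds: "\<And>x. x \<in> A - T \<Longrightarrow> lo \<le> f x \<and> f x \<le> hi"
    and lo: "0 \<le> lo" and hi: "0 \<le> hi"
    and small: "real (card (A \<inter> T)) \<le> \<delta> * real (card A)"
  shows "(1 - \<delta>) * lo \<le> 1 / real (card A) * (\<Sum>x\<in>A. f x)"
    and "1 / real (card A) * (\<Sum>x\<in>A. f x) \<le> hi + \<delta>"
proof -
  have split: "(\<Sum>x\<in>A. f x) = (\<Sum>x\<in>A - T. f x) + (\<Sum>x\<in>A \<inter> T. f x)"
    using sum.subset_diff[of "A \<inter> T" A f] fin by (simp add: Diff_Int)
  have card_split: "real (card A) = real (card (A \<inter> T)) + real (card (A - T))"
    using card_Int_Diff[OF fin, of T] by (metis of_nat_add)
  have pos: "0 < real (card A)" using fin ne by (simp add: card_gt_0_iff)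
  have "(1 - \<delta>) * real (card A) * lo \<le> real (card (A - T)) * lo"
    using card_split small lo by (intro mult_right_mono) (simp_all add: algebra_simps)
  also have "\<dots> \<le> (\<Sum>x\<in>A - T. f x)"
    using bounds by (intro sum_bounded_below) simp
  also have "\<dots> \<le> (\<Sum>x\<in>A. f x)"
    using split sum_nonneg[of "A \<inter> T" f] unit by simp
  finally have "(1 - \<delta>) * lo * real (card A) \<le> (\<Sum>x\<in>A. f x)" by (simp add: mult_ac)
  then show "(1 - \<delta>) * lo \<le> 1 / real (card A) * (\<Sum>x\<in>A. f x)"
    using pos by (simp add: pos_le_divide_eq)
  have "(\<Sum>x\<in>A - T. f x) \<le> real (card (A - T)) * hi"
    using bounds by (intro sum_bounded_above) simp
  also have "\<dots> \<le> real (card A) * hi" using card_split hi by (intro mult_right_mono) simp_all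
  finally have "(\<Sum>x\<in>A. f x) \<le> (hi + \<delta>) * real (card A)"
    using split sum_bounded_above[of "A \<inter> T" f 1] unit small by (simp add: algebra_simps)
  then show "1 / real (card A) * (\<Sum>x\<in>A. f x) \<le> hi + \<delta>"
    using pos by (simp add: pos_divide_le_eq)
qed

lemma sum_Pow_power_card_Diff:
  fixes c :: "'b :: comm_semiring_1"
  assumes "finite M"
  shows "(\<Sum>R\<in>Pow M. c ^ card (M - R)) = (c + 1) ^ card M"
proof -
  have "(\<Sum>R\<in>Pow M. c ^ card (M - R)) = (\<Sum>R\<in>Pow M. (\<Prod>x\<in>R. 1) * (\<Prod>x\<in>M - R. c))"
    by simp
  also have "\<dots> = (\<Prod>x\<in>M. 1 + c)" using prod_add[OF assms, of "\<lambda>_. 1" "\<lambda>_. c"] by simp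
  finally show ?thesis by (simp add: add.commute)
qed

lemma add_one_power_le_three_mult_power:
  fixes a :: real
  assumes "0 < a" and "real n \<le> a"
  shows "(a + 1) ^ n \<le> 3 * a ^ n"
proof -
  have "(1 + 1 / a) ^ n \<le> exp (1 / a) ^ n"
    using assms(1) by (intro power_mono exp_ge_add_one_self) simp
  also have "\<dots> = exp (real n / a)" by (simp add: exp_of_nat_mult[symmetric])
  also have "\<dots> \<le> exp 1" using assms by simp
  also have "\<dots> \<le> 3" by (rule exp_le)
  finally have "(1 + 1 / a) ^ n \<le> 3" .
  moreover have "(a + 1) ^ n = a ^ n * (1 + 1 / a) ^ n"
    using assms(1) by (simp add: power_mult_distrib[symmetric] field_simps)
  ultimately show ?thesis using assms(1) by (simp add: mult_left_mono)
qed

lemma log_ratio_bounds: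
  fixes m x :: real
  assumes "1 < m" and "m \<le> x" and "x \<le> m\<^sup>2"
    and "log 2 m * m \<le> 2 * x" and "x \<le> 2 * log 2 m * m"
  shows "1 / (2 * m) \<le> log 2 x / x" and "log 2 x / x \<le> 4 / m"
proof -
  have "0 < log 2 m" and "0 < x" using assms by simp_all
  have "log 2 m \<le> log 2 x" using assms by simp
  then have "2 * log 2 m * m \<le> 2 * log 2 x * m" using assms(1) by (intro mult_right_mono) simp_all
  then have "x \<le> 2 * log 2 x * m" using assms(5) by linarith
  then show "1 / (2 * m) \<le> log 2 x / x" using \<open>0 < x\<close> assms(1) by (simp add: field_simps)
  have "log 2 x \<le> log 2 (m\<^sup>2)" using assms \<open>0 < x\<close> by simp
  also have "\<dots> = 2 * log 2 m" using assms(1) by (simp add: log_nat_power)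
  finally have "m * log 2 x \<le> m * (2 * log 2 m)" using assms(1) by (intro mult_left_mono) simp_all
  then have "m * log 2 x \<le> 4 * x" using assms(4) by (simp add: algebra_simps)
  then show "log 2 x / x \<le> 4 / m" using \<open>0 < x\<close> assms(1) by (simp add: field_simps)
qed

lemma ceiling_log_add_two_bounds:
  fixes m s :: nat
  assumes "1 \<le> m" and "s = nat \<lceil>log 2 (real m)\<rceil> + 2"
  shows "log 2 m + 2 \<le> s" and "s \<le> log 2 m + 3" and "4 * m \<le> 2 ^ s" and "2 ^ s \<le> 8 * m"
proof -
  have "0 \<le> log 2 m" using assms(1) by simp
  then have s_eq: "real s = of_int \<lceil>log 2 (real m)\<rceil> + 2" using assms(2) by simp
  then show lower: "log 2 m + 2 \<le> s" and upper: "s \<le> log 2 m + 3" by linarith+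
  have two_pow: "real (2 ^ s) = 2 powr real s" by (simp add: powr_realpow)
  have "(2::real) powr (log 2 m + 2) = 4 * m" using assms(1) by (simp add: powr_add)
  then have "real (4 * m) \<le> real (2 ^ s)" unfolding two_pow using powr_mono[OF lower, of 2] by simp
  then show "4 * m \<le> 2 ^ s" by (simp only: of_nat_le_iff)
  have "(2::real) powr (log 2 m + 3) = 8 * m" using assms(1) by (simp add: powr_add)
  then have "real (2 ^ s) \<le> real (8 * m)" unfolding two_pow using powr_mono[OF upper, of 2] by simp
  then show "2 ^ s \<le> 8 * m" by (simp only: of_nat_le_iff)
qed

lemma eight_mult_less_two_power: "7 \<le> n \<Longrightarrow> 8 * n < (2::nat) ^ n"
  by (induction n rule: dec_induct) simp_all

locale block_family =
  fixes m s k :: nat and B Tb :: "nat \<Rightarrow> nat set"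
  assumes m_pos: "0 < m" and s_pos: "0 < s" and s_less_k: "s < k"
    and card_B: "\<And>i. i \<in> {1..m} \<Longrightarrow> card (B i) = k"
    and disjoint_B: "\<And>i j. i \<in> {1..m} \<Longrightarrow> j \<in> {1..m} \<Longrightarrow> i \<noteq> j \<Longrightarrow> B i \<inter> B j = {}"
    and Union_B: "(\<Union>i\<in>{1..m}. B i) = {1..k * m}"
    and Tb_subset: "\<And>i. i \<in> {1..m} \<Longrightarrow> Tb i \<subseteq> B i"
    and card_Tb: "\<And>i. i \<in> {1..m} \<Longrightarrow> card (Tb i) = s"
begin

definition T :: "nat set" where
  "T = (\<Union>i\<in>{1..m}. Tb i)"

definition F :: "nat set set" where
  "F = uc_gen {B i \<union> {t} | i t. i \<in> {1..m} \<and> t \<in> T}"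

definition F_above :: "nat \<Rightarrow> nat set set" where
  "F_above i = {A \<in> F. B i \<subseteq> A}"

definition blocks_in :: "nat set \<Rightarrow> nat set" where
  "blocks_in A = {j \<in> {1..m}. B j \<subseteq> A}"

lemma finite_B: "i \<in> {1..m} \<Longrightarrow> finite (B i)"
  using card_B s_less_k by (metis card.infinite less_zeroE)

lemma finite_Tb: "i \<in> {1..m} \<Longrightarrow> finite (Tb i)"
  using finite_B Tb_subset finite_subset by blast

lemma Tb_disjoint: "i \<in> {1..m} \<Longrightarrow> j \<in> {1..m} \<Longrightarrow> i \<noteq> j \<Longrightarrow> Tb i \<inter> Tb j = {}"
  using disjoint_B Tb_subset by blast

lemma T_subset: "T \<subseteq> {1..k * m}"
  using Tb_subset Union_B unfolding T_def by blast

lemma finite_T: "finite T"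
  using T_subset finite_subset by blast

lemma T_Int_B: "i \<in> {1..m} \<Longrightarrow> T \<inter> B i = Tb i"
  unfolding T_def using Tb_subset disjoint_B by blast

lemma T_Diff_Tb: "i \<in> {1..m} \<Longrightarrow> T - Tb i = (\<Union>j\<in>{1..m} - {i}. Tb j)"
  unfolding T_def using Tb_disjoint by blast

lemma card_Union_Tb: "J \<subseteq> {1..m} \<Longrightarrow> card (\<Union>j\<in>J. Tb j) = s * card J"
proof -
  assume J: "J \<subseteq> {1..m}"
  moreover have "finite J" using J finite_subset by blast
  ultimately have "card (\<Union>j\<in>J. Tb j) = (\<Sum>j\<in>J. card (Tb j))"
    using finite_Tb Tb_disjoint by (intro card_UN_disjoint) blast+
  also have "\<dots> = (\<Sum>j\<in>J. s)" using J card_Tb by (intro sum.cong) auto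
  finally show ?thesis by simp
qed

lemma card_T: "card T = s * m"
  using card_Union_Tb[of "{1..m}"] unfolding T_def by simp

lemma F_memD:
  assumes "A \<in> F"
  shows "A \<subseteq> {1..k * m}" and "\<exists>i\<in>{1..m}. B i \<subseteq> A"
    and "\<And>x. x \<in> A \<Longrightarrow> x \<in> T \<or> (\<exists>j\<in>{1..m}. x \<in> B j \<and> B j \<subseteq> A)"
proof -
  have "A \<subseteq> {1..k * m} \<and> (\<exists>i\<in>{1..m}. B i \<subseteq> A) \<and>
    (\<forall>x\<in>A. x \<in> T \<or> (\<exists>j\<in>{1..m}. x \<in> B j \<and> B j \<subseteq> A))"
    using assms unfolding F_def
  proof (induction rule: uc_gen.induct)
    case (base A)
    then show ?case using T_subset Union_B by blast
  next
    case (union A1 A2)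
    then show ?case by blast
  qed
  then show "A \<subseteq> {1..k * m}" and "\<exists>i\<in>{1..m}. B i \<subseteq> A"
    and "\<And>x. x \<in> A \<Longrightarrow> x \<in> T \<or> (\<exists>j\<in>{1..m}. x \<in> B j \<and> B j \<subseteq> A)" by blast+
qed

lemma finite_F: "finite F"
  using F_memD(1) by (intro finite_subset[of F "Pow {1..k * m}"]) auto

lemma empty_notin_F: "{} \<notin> F"
  using F_memD(2) finite_B card_B s_less_k by fastforce

lemma B_union_in_F:
  assumes i: "i \<in> {1..m}" and "S \<subseteq> T"
  shows "B i \<union> S \<in> F"
proof -
  have "finite S" using assms(2) finite_T finite_subset by blast
  then show ?thesis using assms(2)
  proof (induction S rule: finite_induct)
    case empty
    obtain t where "t \<in> Tb i" using card_Tb[OF i] s_pos by fastforce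
    then have "t \<in> T" and "B i \<union> {t} = B i" using i Tb_subset unfolding T_def by blast+
    then show ?case unfolding F_def using i by (metis (mono_tags, lifting) mem_Collect_eq sup_bot_right uc_gen.base)
  next
    case (insert t S)
    have "B i \<union> {t} \<in> F" unfolding F_def using i insert by (intro uc_gen.base) blast
    with insert have "(B i \<union> {t}) \<union> (B i \<union> S) \<in> F" unfolding F_def by (blast intro: uc_gen.union)
    then show ?case by (simp add: Un_left_commute insert_commute)
  qed
qed

definition sets_with_blocks :: "nat set \<Rightarrow> nat set set" where
  "sets_with_blocks R = (\<lambda>S. \<Union>(B ` R) \<union> S) ` Pow (\<Union>j\<in>{1..m} - R. Tb j)"

lemma F_mem_sets_with_blocks:
  assumes "A \<in> F"
  shows "A \<in> sets_with_blocks (blocks_in A)"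
proof -
  let ?S = "A \<inter> (\<Union>j\<in>{1..m} - blocks_in A. Tb j)"
  have "A \<subseteq> \<Union>(B ` blocks_in A) \<union> ?S"
  proof
    fix x assume x: "x \<in> A"
    consider "x \<in> T" | j where "j \<in> {1..m}" "x \<in> B j" "B j \<subseteq> A"
      using F_memD(3)[OF assms x] by blast
    then show "x \<in> \<Union>(B ` blocks_in A) \<union> ?S"
    proof cases
      case 1
      then obtain j where j: "j \<in> {1..m}" "x \<in> Tb j" unfolding T_def by blast
      show ?thesis
      proof (cases "j \<in> blocks_in A")
        case True
        then show ?thesis using j Tb_subset by blast
      next
        case False
        then show ?thesis using j x by blast
      qed
    next
      case 2
      then show ?thesis unfolding blocks_in_def by blast
    qed
  qed
  then have "A = \<Union>(B ` blocks_in A) \<union> ?S" unfolding blocks_in_def by blast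
  then show ?thesis unfolding sets_with_blocks_def by blast
qed

lemma card_sets_with_blocks: "card (sets_with_blocks R) \<le> (2 ^ s) ^ card ({1..m} - R)"
proof -
  have "finite (\<Union>j\<in>{1..m} - R. Tb j)" using finite_Tb by blast
  then have "card (sets_with_blocks R) \<le> card (Pow (\<Union>j\<in>{1..m} - R. Tb j))"
    unfolding sets_with_blocks_def by (intro card_image_le) simp
  also have "\<dots> = 2 ^ card (\<Union>j\<in>{1..m} - R. Tb j)"
    using \<open>finite (\<Union>j\<in>{1..m} - R. Tb j)\<close> by (rule card_Pow)
  also have "card (\<Union>j\<in>{1..m} - R. Tb j) = s * card ({1..m} - R)" by (rule card_Union_Tb) blast
  finally show ?thesis by (simp add: power_mult)
qed

definition single_block_sets :: "nat \<Rightarrow> nat set set" where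
  "single_block_sets i = (\<lambda>S. B i \<union> S) ` Pow (T - Tb i)"

lemma card_single_block_sets:
  assumes i: "i \<in> {1..m}"
  shows "card (single_block_sets i) = 2 ^ (s * (m - 1))"
proof -
  have "inj_on (\<lambda>S. B i \<union> S) (Pow (T - Tb i))"
    using T_Int_B[OF i] by (intro inj_onI) blast
  then have "card (single_block_sets i) = card (Pow (T - Tb i))"
    unfolding single_block_sets_def by (rule card_image)
  also have "\<dots> = 2 ^ card (\<Union>j\<in>{1..m} - {i}. Tb j)"
    using finite_T T_Diff_Tb[OF i] by (metis card_Pow finite_Diff)
  also have "\<dots> = 2 ^ (s * (m - 1))" using i by (subst card_Union_Tb) auto
  finally show ?thesis .
qed

lemma single_block_sets_subset: "i \<in> {1..m} \<Longrightarrow> single_block_sets i \<subseteq> F_above i"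
  unfolding single_block_sets_def F_above_def using B_union_in_F by blast

lemma single_block_sets_disjoint:
  assumes i: "i \<in> {1..m}" and j: "j \<in> {1..m}" and "i \<noteq> j"
  shows "single_block_sets i \<inter> single_block_sets j = {}"
proof (rule ccontr)
  assume "single_block_sets i \<inter> single_block_sets j \<noteq> {}"
  then obtain S where "S \<subseteq> T" and "B j \<subseteq> B i \<union> S" unfolding single_block_sets_def by blast
  then have "B j \<subseteq> Tb j" using disjoint_B[OF i j \<open>i \<noteq> j\<close>] T_Int_B[OF j] by blast
  then have "k \<le> s" using card_mono[OF finite_Tb[OF j]] card_B[OF j] card_Tb[OF j] by metis
  then show False using s_less_k by simp
qed

lemma card_F_above_lower: "i \<in> {1..m} \<Longrightarrow> 2 ^ (s * (m - 1)) \<le> card (F_above i)"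
  using card_mono[OF _ single_block_sets_subset] card_single_block_sets finite_F
  unfolding F_above_def by fastforce

lemma card_F_lower: "m * 2 ^ (s * (m - 1)) \<le> card F"
proof -
  have "card (\<Union>i\<in>{1..m}. single_block_sets i) = (\<Sum>i\<in>{1..m}. card (single_block_sets i))"
    using single_block_sets_disjoint finite_T
    by (intro card_UN_disjoint) (auto simp: single_block_sets_def)
  also have "\<dots> = m * 2 ^ (s * (m - 1))" by (simp add: card_single_block_sets)
  moreover have "(\<Union>i\<in>{1..m}. single_block_sets i) \<subseteq> F"
    using single_block_sets_subset unfolding F_above_def by blast
  ultimately show ?thesis using card_mono[OF finite_F] by metis
qed

lemma card_F_above_upper:
  assumes i: "i \<in> {1..m}"
  shows "card (F_above i) \<le> (2 ^ s + 1) ^ (m - 1)"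
proof -
  define M where "M = {1..m} - {i}"
  have "finite M" unfolding M_def by simp
  have cover: "F_above i \<subseteq> (\<Union>R\<in>Pow M. sets_with_blocks (insert i R))"
  proof
    fix A assume "A \<in> F_above i"
    then have A: "A \<in> F" and "insert i (blocks_in A - {i}) = blocks_in A"
      using i unfolding F_above_def blocks_in_def by auto
    then have "A \<in> sets_with_blocks (insert i (blocks_in A - {i}))"
      using F_mem_sets_with_blocks by simp
    moreover have "blocks_in A - {i} \<in> Pow M" unfolding M_def blocks_in_def by auto
    ultimately show "A \<in> (\<Union>R\<in>Pow M. sets_with_blocks (insert i R))" by blast
  qed
  have "finite (sets_with_blocks R)" for R
    unfolding sets_with_blocks_def using finite_Tb by simp
  then have "card (F_above i) \<le> card (\<Union>R\<in>Pow M. sets_with_blocks (insert i R))"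
    using cover \<open>finite M\<close> by (intro card_mono) auto
  also have "\<dots> \<le> (\<Sum>R\<in>Pow M. card (sets_with_blocks (insert i R)))"
    by (rule card_UN_le) (simp add: \<open>finite M\<close>)
  also have "\<dots> \<le> (\<Sum>R\<in>Pow M. (2 ^ s) ^ card (M - R))"
  proof (rule sum_mono)
    fix R have "{1..m} - insert i R = M - R" unfolding M_def by blast
    then show "card (sets_with_blocks (insert i R)) \<le> (2 ^ s) ^ card (M - R)"
      using card_sets_with_blocks[of "insert i R"] by simp
  qed
  also have "\<dots> = (2 ^ s + 1) ^ card M" by (rule sum_Pow_power_card_Diff[OF \<open>finite M\<close>])
  also have "card M = m - 1" using i unfolding M_def by simp
  finally show ?thesis .
qed

lemma card_F_le_sum_F_above: "card F \<le> (\<Sum>i\<in>{1..m}. card (F_above i))"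
proof -
  have "F \<subseteq> (\<Union>i\<in>{1..m}. F_above i)"
    using F_memD(2) unfolding F_above_def by blast
  then have "card F \<le> card (\<Union>i\<in>{1..m}. F_above i)"
    using finite_F by (intro card_mono) (auto simp: F_above_def)
  also have "\<dots> \<le> (\<Sum>i\<in>{1..m}. card (F_above i))" by (rule card_UN_le) simp
  finally show ?thesis .
qed

lemma sets_containing_eq_F_above:
  assumes "i \<in> {1..m}" and "x \<in> B i - T"
  shows "{A \<in> F. x \<in> A} = F_above i"
  using assms F_memD(3) disjoint_B unfolding F_above_def by blast

lemma card_F_above_le_three:
  assumes "m \<le> 2 ^ s" and "i \<in> {1..m}"
  shows "real (card (F_above i)) \<le> 3 * 2 ^ (s * (m - 1))"
proof -
  have "real (card (F_above i)) \<le> real ((2 ^ s + 1) ^ (m - 1))"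
    using card_F_above_upper[OF assms(2)] by (simp only: of_nat_le_iff)
  also have "\<dots> = (2 ^ s + 1) ^ (m - 1)" by (simp add: add.commute)
  also have "\<dots> \<le> 3 * (2 ^ s) ^ (m - 1)"
  proof (rule add_one_power_le_three_mult_power)
    have "m - 1 \<le> 2 ^ s" using assms(1) by linarith
    then show "real (m - 1) \<le> 2 ^ s" by (metis of_nat_le_iff of_nat_numeral of_nat_power)
  qed simp
  also have "\<dots> = 3 * 2 ^ (s * (m - 1))" by (simp only: power_mult)
  finally show ?thesis .
qed

lemma card_F_le_three:
  assumes "m \<le> 2 ^ s"
  shows "real (card F) \<le> 3 * real m * 2 ^ (s * (m - 1))"
proof -
  have "real (card F) \<le> (\<Sum>i\<in>{1..m}. real (card (F_above i)))"
    using card_F_le_sum_F_above by (metis of_nat_le_iff of_nat_sum)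
  also have "\<dots> \<le> (\<Sum>i\<in>{1..m}. 3 * 2 ^ (s * (m - 1)))"
    using card_F_above_le_three[OF assms] by (intro sum_mono) auto
  finally show ?thesis by simp
qed

lemma abundance_bounds:
  assumes "m \<le> 2 ^ s" and "x \<in> {1..k * m} - T"
  shows "1 / (3 * m) \<le> abundance F x" and "abundance F x \<le> 3 / m"
proof -
  obtain i where i: "i \<in> {1..m}" and x: "x \<in> B i - T" using assms(2) Union_B by blast
  define P :: real where "P = 2 ^ (s * (m - 1))"
  have "0 < P" and "0 < real m" unfolding P_def using m_pos by simp_all
  have above: "P \<le> card (F_above i)" "card (F_above i) \<le> 3 * P"
    unfolding P_def using card_F_above_lower[OF i]
    by (metis of_nat_le_iff of_nat_numeral of_nat_power) (rule card_F_above_le_three[OF assms(1) i])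
  have total: "m * P \<le> card F" "card F \<le> 3 * real m * P"
    unfolding P_def using card_F_lower
    by (metis of_nat_le_iff of_nat_mult of_nat_numeral of_nat_power) (rule card_F_le_three[OF assms(1)])
  have "0 < real (card F)"
    using total(1) \<open>0 < P\<close> \<open>0 < real m\<close> by (meson mult_pos_pos order_less_le_trans)
  have abundance_eq: "abundance F x = card (F_above i) / card F"
    unfolding abundance_def sets_containing_eq_F_above[OF i x] ..
  have "1 / (3 * m) = P / (3 * m * P)" using \<open>0 < P\<close> by simp
  also have "\<dots> \<le> card (F_above i) / card F"
    using above total \<open>0 < P\<close> \<open>0 < real (card F)\<close> by (intro frac_le) simp_all
  finally show "1 / (3 * m) \<le> abundance F x" unfolding abundance_eq .
  have "card (F_above i) / card F \<le> 3 * P / (m * P)"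
    using above total \<open>0 < P\<close> \<open>0 < real (card F)\<close> by (intro frac_le) simp_all
  also have "\<dots> = 3 / m" using \<open>0 < P\<close> by simp
  finally show "abundance F x \<le> 3 / m" unfolding abundance_eq .
qed

end

locale log_block_family = block_family +
  assumes m_ge_16: "16 \<le> m"
    and s_eq: "s = nat \<lceil>log 2 (real m)\<rceil> + 2"
    and k_eq: "k = m\<^sup>2 * s"
begin

lemma s_bounds: "log 2 m + 2 \<le> s" "s \<le> log 2 m + 3" "4 * m \<le> 2 ^ s" "2 ^ s \<le> 8 * m"
  using ceiling_log_add_two_bounds[OF _ s_eq] m_ge_16 by simp_all

lemma s_le_m: "s \<le> m"
proof -
  have "(2::nat) ^ s < 2 ^ m" using s_bounds(4) eight_mult_less_two_power[of m] m_ge_16 by linarith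
  then show ?thesis using power_less_imp_less_exp by fastforce
qed

lemma log_m_ge_4: "4 \<le> log 2 m"
proof -
  have "(2::real) powr 4 \<le> m" using m_ge_16 by simp
  then show ?thesis using m_ge_16 by (subst le_log_iff) auto
qed

lemma mean_abundance_bounds:
  assumes A: "A \<subseteq> {1..k * m}" and "k \<le> card A"
  shows "1 / (6 * m) \<le> 1 / card A * (\<Sum>x\<in>A. abundance F x)"
    and "1 / card A * (\<Sum>x\<in>A. abundance F x) \<le> 4 / m"
proof -
  have "finite A" using A finite_subset by blast
  have "A \<noteq> {}" using \<open>k \<le> card A\<close> s_less_k by auto
  have "0 < real m" using m_pos by simp
  have "card (A \<inter> T) * m \<le> s * m * m"
    using card_mono[OF finite_T, of "A \<inter> T"] card_T by simp
  also have "\<dots> \<le> card A" using \<open>k \<le> card A\<close> k_eq by (simp add: power2_eq_square mult_ac)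
  finally have "real (card (A \<inter> T)) * real m \<le> real (card A)"
    by (metis of_nat_le_iff of_nat_mult)
  then have small: "real (card (A \<inter> T)) \<le> 1 / m * card A"
    using \<open>0 < real m\<close> by (simp add: field_simps)
  have unit: "0 \<le> abundance F x \<and> abundance F x \<le> 1" if "x \<in> A" for x
    by (simp add: abundance_nonneg abundance_le_one)
  have off_T: "1 / (3 * m) \<le> abundance F x \<and> abundance F x \<le> 3 / m" if "x \<in> A - T" for x
    using abundance_bounds s_bounds(3) A that by auto
  have lower: "(1 - 1 / m) * (1 / (3 * m)) \<le> 1 / card A * (\<Sum>x\<in>A. abundance F x)"
    and upper: "1 / card A * (\<Sum>x\<in>A. abundance F x) \<le> 3 / m + 1 / m"
    using mean_bounds_off_small_set[OF \<open>finite A\<close> \<open>A \<noteq> {}\<close> unit off_T _ _ small] by simp_all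
  have "1 / (6 * m) \<le> (1 - 1 / m) * (1 / (3 * m))"
    using m_ge_16 by (simp add: field_simps)
  then show "1 / (6 * m) \<le> 1 / card A * (\<Sum>x\<in>A. abundance F x)"
    using lower by linarith
  have "3 / m + 1 / m = 4 / real m" by (simp add: add_divide_distrib[symmetric])
  then show "1 / card A * (\<Sum>x\<in>A. abundance F x) \<le> 4 / m"
    using upper by linarith
qed

lemma AOD_bounds: "1 / (6 * m) \<le> AOD F" "AOD F \<le> 4 / m"
proof -
  have "F - {{}} = F" using empty_notin_F by blast
  have "0 < m * 2 ^ (s * (m - 1))" using m_pos by simp
  then have "0 < card F" using card_F_lower by linarith
  have A_bounds: "1 / (6 * m) \<le> 1 / card A * (\<Sum>x\<in>A. abundance F x)"
    "1 / card A * (\<Sum>x\<in>A. abundance F x) \<le> 4 / m" if A: "A \<in> F" for A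
  proof -
    obtain i where i: "i \<in> {1..m}" and "B i \<subseteq> A" using F_memD(2)[OF A] by blast
    have "finite A" using F_memD(1)[OF A] finite_subset by blast
    then have "k \<le> card A" using card_mono[OF _ \<open>B i \<subseteq> A\<close>] card_B[OF i] by simp
    then show "1 / (6 * m) \<le> 1 / card A * (\<Sum>x\<in>A. abundance F x)"
      "1 / card A * (\<Sum>x\<in>A. abundance F x) \<le> 4 / m"
      using mean_abundance_bounds F_memD(1)[OF A] by auto
  qed
  have "card F * (1 / (6 * m)) \<le> (\<Sum>A\<in>F. 1 / card A * (\<Sum>x\<in>A. abundance F x))"
    using A_bounds(1) by (intro sum_bounded_below) auto
  then show "1 / (6 * m) \<le> AOD F"
    unfolding AOD_def \<open>F - {{}} = F\<close> using \<open>0 < card F\<close> by (simp add: field_simps)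
  have "(\<Sum>A\<in>F. 1 / card A * (\<Sum>x\<in>A. abundance F x)) \<le> card F * (4 / m)"
    using A_bounds(2) by (intro sum_bounded_above) auto
  then show "AOD F \<le> 4 / m"
    unfolding AOD_def \<open>F - {{}} = F\<close> using \<open>0 < card F\<close> by (simp add: field_simps)
qed

lemma log_card_F_bounds:
  "real s * (real m - 1) \<le> log 2 (card F)" "log 2 (card F) \<le> real s * real m"
proof -
  have "(2::real) ^ (s * (m - 1)) \<le> m * 2 ^ (s * (m - 1))" using m_pos by simp
  also have "\<dots> \<le> card F"
    using card_F_lower by (metis of_nat_le_iff of_nat_mult of_nat_numeral of_nat_power)
  finally have lower: "(2::real) ^ (s * (m - 1)) \<le> card F" .
  then have "log 2 (2 ^ (s * (m - 1))) \<le> log 2 (card F)"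
    by (intro log_mono) simp_all
  then show "real s * (real m - 1) \<le> log 2 (card F)" using m_pos by (simp add: log_nat_power of_nat_diff)
  have "real (card F) \<le> 3 * real m * 2 ^ (s * (m - 1))"
    using card_F_le_three s_bounds(3) by simp
  also have "\<dots> \<le> 2 ^ s * 2 ^ (s * (m - 1))"
  proof (rule mult_right_mono)
    have "3 * m \<le> 2 ^ s" using s_bounds(3) by simp
    then have "real (3 * m) \<le> real (2 ^ s)" by (simp only: of_nat_le_iff)
    then show "3 * real m \<le> 2 ^ s" by simp
  qed simp
  also have "\<dots> = 2 ^ (s + s * (m - 1))" by (simp add: power_add)
  also have "s + s * (m - 1) = s * m" using m_pos by (cases m) simp_all
  moreover have "0 < real (card F)" using lower by (rule order_less_le_trans[rotated]) simp
  ultimately have "log 2 (card F) \<le> log 2 (2 ^ (s * m))" by (intro log_mono) simp_all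
  then show "log 2 (card F) \<le> real s * real m" by (simp add: log_nat_power)
qed

lemma log_ratio_card_F_bounds:
  "1 / (2 * m) \<le> log 2 (log 2 (card F)) / log 2 (card F)"
  "log 2 (log 2 (card F)) / log 2 (card F) \<le> 4 / m"
proof -
  define x where "x = log 2 (card F)"
  have x: "real s * (real m - 1) \<le> x" "x \<le> real s * real m"
    using log_card_F_bounds unfolding x_def by simp_all
  have m: "16 \<le> real m" using m_ge_16 by simp
  have "2 \<le> real s" "log 2 m \<le> s" "s \<le> 2 * log 2 m"
    using s_bounds(1,2) log_m_ge_4 by simp_all
  have "real s \<le> real m" using s_le_m by simp
  have "real m \<le> 2 * (real m - 1)" using m by simp
  also have "\<dots> \<le> real s * (real m - 1)"
    using \<open>2 \<le> real s\<close> m by (intro mult_right_mono) simp_all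
  finally have "m \<le> x" using x by simp
  moreover have "x \<le> (real m)\<^sup>2"
    using x mult_right_mono[OF \<open>real s \<le> real m\<close>, of "real m"] by (simp add: power2_eq_square)
  moreover have "log 2 m * m \<le> 2 * x"
  proof -
    have "log 2 m * m \<le> real s * m" using \<open>log 2 m \<le> s\<close> by (intro mult_right_mono) simp_all
    also have "\<dots> \<le> real s * (2 * (real m - 1))" using m by (intro mult_left_mono) simp_all
    also have "\<dots> = 2 * (real s * (real m - 1))" by simp
    also have "\<dots> \<le> 2 * x" using x by simp
    finally show ?thesis .
  qed
  moreover have "x \<le> 2 * log 2 m * m"
    using x mult_right_mono[OF \<open>s \<le> 2 * log 2 m\<close>, of "real m"] by simp
  ultimately show "1 / (2 * m) \<le> log 2 (log 2 (card F)) / log 2 (card F)"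
    and "log 2 (log 2 (card F)) / log 2 (card F) \<le> 4 / m"
    using log_ratio_bounds[of "real m" x] m unfolding x_def by simp_all
qed

lemma density_bounds:
  defines "L \<equiv> log 2 (log 2 (real (card F))) / log 2 (real (card F))"
    and "avg \<equiv> 1 / real (k * m) * (\<Sum>x\<in>{1..k * m}. abundance F x)"
  shows "1 / 24 * L \<le> AOD F \<and> AOD F \<le> 8 * L \<and> 1 / 24 * L \<le> avg \<and> avg \<le> 8 * L"
proof -
  have "k \<le> card {1..k * m}" using m_pos by simp
  then have "1 / (6 * m) \<le> avg" "avg \<le> 4 / m"
    using mean_abundance_bounds[of "{1..k * m}"] unfolding avg_def by simp_all
  moreover have "1 / (2 * real m) = 1 / 2 * (1 / m)" "1 / (6 * real m) = 1 / 6 * (1 / m)"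
    "4 / real m = 4 * (1 / m)" by simp_all
  ultimately show ?thesis
    using log_ratio_card_F_bounds AOD_bounds unfolding L_def by linarith
qed

end

theorem mainTheorem4:
  shows "\<exists>c C :: real. \<exists>m0 :: nat. c > 0 \<and> C > 0 \<and>
    (\<forall>m :: nat. m \<ge> m0 \<longrightarrow>
      (\<forall>(B :: nat \<Rightarrow> nat set) (Tb :: nat \<Rightarrow> nat set).
        let s = nat \<lceil>log 2 (real m)\<rceil> + 2; k = m^2 * s; n = k * m in
        (\<forall>i\<in>{1..m}. card (B i) = k) \<longrightarrow>
        (\<forall>i\<in>{1..m}. \<forall>j\<in>{1..m}. i \<noteq> j \<longrightarrow> B i \<inter> B j = {}) \<longrightarrow>
        (\<Union>i\<in>{1..m}. B i) = {1..n} \<longrightarrow>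
        (\<forall>i\<in>{1..m}. Tb i \<subseteq> B i \<and> card (Tb i) = s) \<longrightarrow>
        (let T = (\<Union>i\<in>{1..m}. Tb i);
             F = uc_gen {B i \<union> {t} | i t. i \<in> {1..m} \<and> t \<in> T};
             L = log 2 (log 2 (real (card F))) / log 2 (real (card F));
             avg = (1 / real n) * (\<Sum>x\<in>{1..n}. abundance F x)
         in c * L \<le> AOD F \<and> AOD F \<le> C * L \<and> c * L \<le> avg \<and> avg \<le> C * L)))"
  unfolding Let_def
proof (rule exI[of _ "1 / 24"], rule exI[of _ 8], rule exI[of _ 16],
    intro conjI[of "(0::real) < 1 / 24"] conjI[of "(0::real) < 8"] allI impI, goal_cases)
  case (3 m B Tb)
  define s where "s = nat \<lceil>log 2 (real m)\<rceil> + 2"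
  have "1 < m\<^sup>2" using \<open>16 \<le> m\<close> by (intro one_less_power) simp_all
  moreover have "0 < s" unfolding s_def by simp
  ultimately have "s < m\<^sup>2 * s" using mult_less_mono1[of 1 "m\<^sup>2" s] by simp
  then interpret log_block_family m s "m\<^sup>2 * s" B Tb
    using 3 unfolding s_def by unfold_locales auto
  from density_bounds show ?case unfolding F_def T_def s_def .
qed simp_all

end
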